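(* For all integers $k\ge2$ and $n\ge2$ and all valuations $v$, we have $b^e(v,P^{n+k-1,1})>b^e(v,P^{n,k})$.
   Context: Let $F$ be a continuous, atomless cumulative distribution function of valuations on the nonnegative reals. For an integer $m\ge2$ define $b^e(v,m)=v-F(v)^{-(m-1)}\int_0^vF(u)^{m-1}du$. For a probability distribution $P=(p_j)_{j\ge0}$ on the number of agents define $b^e(v,P)=\sum_{j\ge2}p_jb^e(v,j)$. Write $P_{x\ge i}=\sum_{x\ge i}p_x$. Write $P<P'$ iff there exists $l$ such that $P_{x\ge i}=P'_{x\ge i}$ for all $i<l$ and $P_{x\ge i}<P'_{x\ge i}$ for all $i\ge l$. Standing assumption: whenever $P<P'$, we have $b^e(v,P)<b^e(v,P')$ for all $v$. Let $\gamma_A$ be a probability distribution on $\{1,\dots,\kappa\}$, for a fixed integer $\kappa\ge2$, with $\gamma_A(1)<1$. For $n\ge2$ and $k\ge1$, $P^{n,k}$ denotes the distribution of $k+X_1+\dots+X_{n-1}$, where the $X_j$ are i.i.d. with distribution $\gamma_A$. *)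

theory Defs
  imports "HOL-Probability.Probability"
begin

definition be :: "(real \<Rightarrow> real) \<Rightarrow> real \<Rightarrow> nat \<Rightarrow> real" where
  "be F v m = v - integral {0..v} (\<lambda>u. F u ^ (m - 1)) / F v ^ (m - 1)"

definition beP :: "(real \<Rightarrow> real) \<Rightarrow> real \<Rightarrow> nat pmf \<Rightarrow> real" where
  "beP F v P = (\<Sum>\<^sub>\<infinity>j\<in>{2..}. pmf P j * be F v j)"

definition tail :: "nat pmf \<Rightarrow> nat \<Rightarrow> real" where
  "tail P i = measure_pmf.prob P {i..}"

definition dist_less :: "nat pmf \<Rightarrow> nat pmf \<Rightarrow> bool" where
  "dist_less P P' \<longleftrightarrow> (\<exists>l. (\<forall>i<l. tail P i = tail P' i) \<and> (\<forall>i\<ge>l. tail P i < tail P' i))"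

fun sum_iid :: "nat pmf \<Rightarrow> nat \<Rightarrow> nat pmf" where
  "sum_iid \<gamma> 0 = return_pmf 0"
| "sum_iid \<gamma> (Suc m) = map_pmf (\<lambda>(a, b). a + b) (pair_pmf (sum_iid \<gamma> m) \<gamma>)"

definition Pnk :: "nat pmf \<Rightarrow> nat \<Rightarrow> nat \<Rightarrow> nat pmf" where
  "Pnk \<gamma> n k = map_pmf (\<lambda>s. k + s) (sum_iid \<gamma> (n - 1))"

end

theory Submission
  imports Defs
begin

text \<open>
  The bid \<open>be F v m\<close> is strictly increasing in \<open>m \<ge> 1\<close>: the gap between consecutive bids
  has the sign of \<open>\<integral>\<^sub>0\<^sup>v F\<^sup>p (F v - F)\<close>, whose integrand is continuous, nonnegative, and
  positive where \<open>F = F v / 2\<close>. Let \<open>S\<close> be a sum of \<open>n - 1\<close> and \<open>T\<close> an independent sum of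
  \<open>k - 1\<close> copies of \<open>X\<close>. Then \<open>Pnk \<gamma> n k\<close> is the law of \<open>k + S\<close> and \<open>Pnk \<gamma> (n + k - 1) 1\<close>
  that of \<open>1 + S + T\<close>. Since \<open>X \<ge> 1\<close>, \<open>T \<ge> k - 1\<close> always, and since \<open>X \<ge> 2\<close> with positive
  probability, \<open>T > k - 1\<close> with positive probability; so the increasing function \<open>be F v\<close> has
  strictly larger expectation under the second law.
\<close>

lemma continuous_vanishing_on_negatives_at_0:
  fixes F :: "real \<Rightarrow> real"
  assumes "continuous_on UNIV F" and "\<And>u. u < 0 \<Longrightarrow> F u = 0"
  shows "F 0 = 0"
proof -
  have "closed {u. F u = 0}"
    using continuous_closed_preimage_constant[OF assms(1) closed_UNIV] by simp
  moreover have "{..<0} \<subseteq> {u. F u = 0}"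
    using assms(2) by auto
  ultimately have "closure {..<(0::real)} \<subseteq> {u. F u = 0}"
    by (rule closure_minimal[rotated])
  then show ?thesis by auto
qed

lemma integral_power_Suc_less:
  fixes F :: "real \<Rightarrow> real"
  assumes v: "0 < v" and cont: "continuous_on {0..v} F" and mono: "mono_on {0..v} F"
    and F0: "F 0 = 0" and Fv: "0 < F v"
  shows "integral {0..v} (\<lambda>u. F u ^ Suc p) < F v * integral {0..v} (\<lambda>u. F u ^ p)"
proof -
  define h where "h u = F u ^ p * (F v - F u)" for u
  have h_cont: "continuous_on {0..v} h"
    unfolding h_def by (intro continuous_intros cont)
  have h_nonneg: "0 \<le> h u" if "u \<in> {0..v}" for u
  proof -
    have "F 0 \<le> F u" "F u \<le> F v"
      using that v mono by (auto intro: mono_onD)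
    then show ?thesis unfolding h_def using F0 by simp
  qed
  obtain u0 where u0: "u0 \<in> {0..v}" "F u0 = F v / 2"
    using IVT'[of F 0 "F v / 2" v] F0 Fv v cont by auto
  have "h u0 \<noteq> 0" unfolding h_def using u0 Fv by simp
  then have "integral {0..v} h \<noteq> 0"
    using integral_eq_0_iff[OF h_cont v h_nonneg] u0 by blast
  moreover have "0 \<le> integral {0..v} h"
    using h_nonneg by (intro integral_nonneg integrable_continuous_interval h_cont) auto
  moreover have "integral {0..v} h = F v * integral {0..v} (\<lambda>u. F u ^ p) - integral {0..v} (\<lambda>u. F u ^ Suc p)"
  proof -
    have "integral {0..v} h = integral {0..v} (\<lambda>u. F v * F u ^ p - F u ^ Suc p)"
      unfolding h_def by (simp add: algebra_simps)
    also have "\<dots> = F v * integral {0..v} (\<lambda>u. F u ^ p) - integral {0..v} (\<lambda>u. F u ^ Suc p)"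
      by (subst integral_diff) (auto intro!: integrable_continuous_interval continuous_intros cont)
    finally show ?thesis .
  qed
  ultimately show ?thesis by linarith
qed

lemma strict_mono_be_Suc:
  fixes F :: "real \<Rightarrow> real"
  assumes "0 < v" and "continuous_on {0..v} F" and "mono_on {0..v} F"
    and "F 0 = 0" and "0 < F v"
  shows "strict_mono (\<lambda>m. be F v (Suc m))"
proof (rule strict_mono_Suc_iff[THEN iffD2], intro allI)
  fix p
  have "integral {0..v} (\<lambda>u. F u ^ Suc p) / F v ^ Suc p < integral {0..v} (\<lambda>u. F u ^ p) / F v ^ p"
    using integral_power_Suc_less[OF assms, of p] \<open>0 < F v\<close> by (simp add: field_simps)
  then show "be F v (Suc p) < be F v (Suc (Suc p))"
    unfolding be_def by simp
qed

lemma beP_eq_expectation: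
  assumes "finite (set_pmf P)" and "0 \<le> v"
  shows "beP F v P = measure_pmf.expectation P (be F v)"
proof -
  have be_le_1: "be F v j = 0" if "j < 2" for j
    using that assms(2) by (auto simp: be_def)
  have "beP F v P = (\<Sum>\<^sub>\<infinity>j\<in>set_pmf P. pmf P j * be F v j)"
    unfolding beP_def
    by (rule infsum_cong_neutral) (auto simp: be_le_1 set_pmf_eq)
  also have "\<dots> = measure_pmf.expectation P (be F v)"
    using assms(1) by (simp add: integral_measure_pmf_real mult.commute)
  finally show ?thesis .
qed

lemma expectation_strict_mono_pmf:
  fixes f g :: "'a \<Rightarrow> real"
  assumes "finite (set_pmf M)"
    and "\<And>x. x \<in> set_pmf M \<Longrightarrow> f x \<le> g x"
    and "z \<in> set_pmf M" "f z < g z"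
  shows "measure_pmf.expectation M f < measure_pmf.expectation M g"
proof (rule measure_pmf.integral_less_AE[where A = "{z}"])
  show "emeasure (measure_pmf M) {z} \<noteq> 0"
    using assms(3) by (simp add: emeasure_pmf_single set_pmf_iff)
qed (use assms in \<open>auto simp: integrable_measure_pmf_finite AE_measure_pmf_iff\<close>)

lemma sum_iid_add:
  "sum_iid \<gamma> (a + b) = map_pmf (\<lambda>(s, t). s + t) (pair_pmf (sum_iid \<gamma> a) (sum_iid \<gamma> b))"
proof (induction b)
  case 0
  show ?case by (simp add: pair_return_pmf2 pmf.map_comp o_def)
next
  case (Suc b)
  then show ?case
    by (simp add: pair_map_pmf1 pair_map_pmf2 pair_pair_pmf pmf.map_comp o_def case_prod_unfold add.assoc)
qed

lemma finite_set_pmf_sum_iid: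
  "finite (set_pmf \<gamma>) \<Longrightarrow> finite (set_pmf (sum_iid \<gamma> m))"
  by (induction m) auto

lemma set_pmf_sum_iid_ge:
  assumes "set_pmf \<gamma> \<subseteq> {1..}" and "t \<in> set_pmf (sum_iid \<gamma> m)"
  shows "m \<le> t"
  using assms(2)
proof (induction m arbitrary: t)
  case (Suc m)
  then show ?case using assms(1) by fastforce
qed simp

lemma set_pmf_sum_iid_gt:
  assumes "set_pmf \<gamma> \<subseteq> {1..}" and "x \<in> set_pmf \<gamma>" "2 \<le> x" and "1 \<le> m"
  obtains t where "t \<in> set_pmf (sum_iid \<gamma> m)" "m < t"
proof -
  obtain m' where m': "m = Suc m'" using assms(4) by (cases m) auto
  obtain s where s: "s \<in> set_pmf (sum_iid \<gamma> m')"
    using set_pmf_not_empty[of "sum_iid \<gamma> m'"] by blast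
  have "s + x \<in> set_pmf (sum_iid \<gamma> m)" using s assms(2) m' by force
  moreover have "m < s + x" using set_pmf_sum_iid_ge[OF assms(1) s] assms(3) m' by simp
  ultimately show ?thesis using that by blast
qed

lemma set_pmf_obtain_ge_2:
  assumes "set_pmf \<gamma> \<subseteq> {1..}" and "pmf \<gamma> 1 < 1"
  obtains x :: nat where "x \<in> set_pmf \<gamma>" "2 \<le> x"
proof -
  have "\<gamma> \<noteq> return_pmf 1" using assms(2) by auto
  then have "\<not> set_pmf \<gamma> \<subseteq> {1}" by (simp add: set_pmf_subset_singleton)
  then show ?thesis using assms(1) that by fastforce
qed

lemma expectation_shift_less_sum_iid:
  fixes f :: "nat \<Rightarrow> real"
  assumes f: "strict_mono f" and fin: "finite (set_pmf \<gamma>)" and \<gamma>_ge_1: "set_pmf \<gamma> \<subseteq> {1..}"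
    and x: "x \<in> set_pmf \<gamma>" "2 \<le> x" and j: "1 \<le> j"
  shows "measure_pmf.expectation (sum_iid \<gamma> m) (\<lambda>s. f (j + s)) <
    measure_pmf.expectation (sum_iid \<gamma> (m + j)) f"
proof -
  define S where "S = sum_iid \<gamma> m"
  define T where "T = sum_iid \<gamma> j"
  have fin_ST: "finite (set_pmf (pair_pmf S T))"
    unfolding S_def T_def using fin by (simp add: finite_set_pmf_sum_iid)
  obtain s0 where s0: "s0 \<in> set_pmf S"
    using set_pmf_not_empty[of S] by blast
  obtain t0 where t0: "t0 \<in> set_pmf T" "j < t0"
    using set_pmf_sum_iid_gt[OF \<gamma>_ge_1 x j] unfolding T_def .
  have "measure_pmf.expectation S (\<lambda>s. f (j + s)) =
      measure_pmf.expectation (pair_pmf S T) (\<lambda>(s, t). f (j + s))"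
    using expectation_pair_pmf_fst[of S T "\<lambda>s. f (j + s)"] by (simp add: case_prod_unfold)
  also have "\<dots> < measure_pmf.expectation (pair_pmf S T) (\<lambda>(s, t). f (s + t))"
  proof (rule expectation_strict_mono_pmf[OF fin_ST])
    show "(\<lambda>(s, t). f (j + s)) z \<le> (\<lambda>(s, t). f (s + t)) z" if "z \<in> set_pmf (pair_pmf S T)" for z
      using that set_pmf_sum_iid_ge[OF \<gamma>_ge_1] f unfolding T_def
      by (auto simp: strict_mono_less_eq)
    show "(s0, t0) \<in> set_pmf (pair_pmf S T)" using s0 t0 by simp
    show "(\<lambda>(s, t). f (j + s)) (s0, t0) < (\<lambda>(s, t). f (s + t)) (s0, t0)"
      using t0 f by (simp add: strict_mono_less)
  qed
  also have "\<dots> = measure_pmf.expectation (sum_iid \<gamma> (m + j)) f"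
    by (simp add: sum_iid_add S_def T_def case_prod_unfold)
  finally show ?thesis unfolding S_def .
qed

theorem lemma2:
  fixes F :: "real \<Rightarrow> real" and \<gamma> :: "nat pmf" and \<kappa> n k :: nat and v :: real
  assumes F_mono: "mono F"
    and F_cont: "continuous_on UNIV F"
    and F_nonneg_support: "\<And>u. u < 0 \<Longrightarrow> F u = 0"
    and F_le1: "\<And>u. F u \<le> 1"
    and F_lim: "(F \<longlongrightarrow> 1) at_top"
    and standing: "\<And>P P' w. dist_less P P' \<Longrightarrow> F w > 0 \<Longrightarrow> beP F w P < beP F w P'"
    and kappa: "\<kappa> \<ge> 2"
    and gamma_supp: "set_pmf \<gamma> \<subseteq> {1..\<kappa>}"
    and gamma_1: "pmf \<gamma> 1 < 1"
    and k: "k \<ge> 2" and n: "n \<ge> 2"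
    and v: "F v > 0"
  shows "beP F v (Pnk \<gamma> (n + k - 1) 1) > beP F v (Pnk \<gamma> n k)"
proof -
  have \<gamma>_ge_1: "set_pmf \<gamma> \<subseteq> {1..}" using gamma_supp by auto
  obtain x where x: "x \<in> set_pmf \<gamma>" "2 \<le> x"
    using set_pmf_obtain_ge_2[OF \<gamma>_ge_1 gamma_1] .
  have F0: "F 0 = 0"
    using continuous_vanishing_on_negatives_at_0[OF F_cont F_nonneg_support] .
  have v_pos: "0 < v"
    using v F0 F_mono by (metis less_irrefl monoD not_less)
  define g where "g = (\<lambda>m. be F v (Suc m))"
  have g: "strict_mono g" unfolding g_def
    using F0 v v_pos F_cont F_mono
    by (intro strict_mono_be_Suc) (auto intro: continuous_on_subset mono_on_subset)
  have fin_\<gamma>: "finite (set_pmf \<gamma>)" using gamma_supp finite_subset by blast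
  then have fin_Pnk: "finite (set_pmf (Pnk \<gamma> m j))" for m j
    unfolding Pnk_def by (simp add: finite_set_pmf_sum_iid)
  have "beP F v (Pnk \<gamma> n k) = measure_pmf.expectation (sum_iid \<gamma> (n - 1)) (\<lambda>s. g (k - 1 + s))"
    using beP_eq_expectation[OF fin_Pnk] v_pos k by (simp add: Pnk_def g_def Suc_diff_le)
  also have "\<dots> < measure_pmf.expectation (sum_iid \<gamma> (n - 1 + (k - 1))) g"
    by (rule expectation_shift_less_sum_iid[OF g fin_\<gamma> \<gamma>_ge_1 x]) (use k in simp)
  also have "\<dots> = beP F v (Pnk \<gamma> (n + k - 1) 1)"
  proof -
    have "n + k - 1 - 1 = n - 1 + (k - 1)" using n k by simp
    then show ?thesis
      using beP_eq_expectation[OF fin_Pnk, of v F "n + k - 1" 1] v_pos by (simp add: Pnk_def g_def)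
  qed
  finally show ?thesis .
qed

end
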